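(* Let $X$ be a compact Hausdorff space, $(H,e)$ a unital Hilbert space, and $T:C(X)\to H$ a unital positive linear map with associated probability measure $\mu$ (so $(Tv,e)=\int v\,d\mu$). Then $T$ is a nuclear morphism if and only if $T+e\odot q$ is separable for some $q\in I_\mu(X)$; in this case $q$ can be chosen positive.
   Context: A Hilbert $*$-space is a complex Hilbert space (inner product linear in the first variable) with a conjugate-linear $\zeta\mapsto\zeta^*$, $\zeta^{**}=\zeta$, $(\zeta^*,\eta^* )=\overline{(\zeta,\eta)}$. A unital Hilbert space $(H,e)$ has a fixed hermitian unit vector $e$ and unital cone $\mathfrak c_e=\{\zeta\in H_h:\|\zeta\|\le\sqrt2(\zeta,e)\}$. A linear map $T:C(X)\to H$ is unital positive if $T(1)=e$ and $T(C(X)_+)\subseteq\mathfrak c_e$; for such $T$, $v\mapsto(Tv,e)$ is given by a unique probability Radon measure $\mu$. Radon measures are identified with functionals on $C(X)$, $\langle v,q\rangle=\int v\,dq$, with total-variation norm $\|q\|$. $I_\mu(X)$ denotes the set of real (signed) Radon measures absolutely continuous with respect to $\mu$ (i.e. $h\mu$ with $h\in L^1(X,\mu)$ real). For $\gamma\in H$ and a measure $q$, $\gamma\odot q$ is the map $v\mapsto\langle v,q\rangle\gamma$. A linear map $\phi:C(X)\to H$ is separable if there are positive Radon measures $q_l$ and vectors $p_l\in\mathfrak c_e$ ($l=1,2,\dots$) with $\phi(v)=\lim_k\sum_{l=1}^k\langle v,q_l\rangle p_l$ in $H$ for every $v$. $T$ is a nuclear morphism if $T=\sum_l\gamma_l\odot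 q_l$ with $\gamma_l\in H_h$, $\|\gamma_l\|\le1$, $q_l\in I_\mu(X)$ and $\sum_l\|q_l\|<\infty$. *)

theory Defs
  imports "HOL-Probability.Probability"
begin

text \<open>The carrier is a real Banach space type 'h;
  complex scalar multiplication cmul extends the real one, ip is a complex inner
  product (linear in the first variable) inducing the norm, and star is the involution.\<close>

definition hilbert_star_space ::
  "(complex \<Rightarrow> 'h::banach \<Rightarrow> 'h) \<Rightarrow> ('h \<Rightarrow> 'h \<Rightarrow> complex) \<Rightarrow> ('h \<Rightarrow> 'h) \<Rightarrow> bool" where
  "hilbert_star_space cmul ip star \<longleftrightarrow>
     (\<forall>r x. cmul (complex_of_real r) x = scaleR r x) \<and>
     (\<forall>a b x. cmul (a + b) x = cmul a x + cmul b x) \<and>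
     (\<forall>a x y. cmul a (x + y) = cmul a x + cmul a y) \<and>
     (\<forall>a b x. cmul (a * b) x = cmul a (cmul b x)) \<and>
     (\<forall>x y z. ip (x + y) z = ip x z + ip y z) \<and>
     (\<forall>a x y. ip (cmul a x) y = a * ip x y) \<and>
     (\<forall>x y. ip y x = cnj (ip x y)) \<and>
     (\<forall>x. norm x = sqrt (Re (ip x x))) \<and>
     (\<forall>x y. star (x + y) = star x + star y) \<and>
     (\<forall>a x. star (cmul a x) = cmul (cnj a) (star x)) \<and>
     (\<forall>x. star (star x) = x) \<and>
     (\<forall>x y. ip (star x) (star y) = cnj (ip x y))"

definition hermitian :: "('h \<Rightarrow> 'h) \<Rightarrow> 'h set" where
  "hermitian star = {z. star z = z}"

definition unital_cone ::
  "('h::real_normed_vector \<Rightarrow> 'h \<Rightarrow> complex) \<Rightarrow> ('h \<Rightarrow> 'h) \<Rightarrow> 'h \<Rightarrow> 'h set" where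
  "unital_cone ip star e = {z \<in> hermitian star. norm z \<le> sqrt 2 * Re (ip z e)}"

text \<open>C(X): continuous complex-valued functions on X (X compact, so UNIV of the type).\<close>
definition CX :: "('x::topological_space \<Rightarrow> complex) set" where
  "CX = {v. continuous_on UNIV v}"

definition CX_pos :: "('x::topological_space \<Rightarrow> complex) set" where
  "CX_pos = {v \<in> CX. \<forall>x. Im (v x) = 0 \<and> Re (v x) \<ge> 0}"

text \<open>Linear maps C(X) \<rightarrow> H (only the values on C(X) matter).\<close>
definition lin_map :: "(complex \<Rightarrow> 'h::real_vector \<Rightarrow> 'h) \<Rightarrow> (('x::topological_space \<Rightarrow> complex) \<Rightarrow> 'h) \<Rightarrow> bool" where
  "lin_map cmul T \<longleftrightarrow>
     (\<forall>v\<in>CX. \<forall>w\<in>CX. T (\<lambda>x. v x + w x) = T v + T w) \<and>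
     (\<forall>c. \<forall>v\<in>CX. T (\<lambda>x. c * v x) = cmul c (T v))"

definition unital_positive ::
  "(complex \<Rightarrow> 'h::real_normed_vector \<Rightarrow> 'h) \<Rightarrow> ('h \<Rightarrow> 'h \<Rightarrow> complex) \<Rightarrow> ('h \<Rightarrow> 'h) \<Rightarrow> 'h
   \<Rightarrow> (('x::topological_space \<Rightarrow> complex) \<Rightarrow> 'h) \<Rightarrow> bool" where
  "unital_positive cmul ip star e T \<longleftrightarrow>
     lin_map cmul T \<and> T (\<lambda>x. 1) = e \<and> (\<forall>v\<in>CX_pos. T v \<in> unital_cone ip star e)"

definition radon_measure :: "'x::topological_space measure \<Rightarrow> bool" where
  "radon_measure M \<longleftrightarrow> sets M = sets borel \<and> finite_measure M \<and>
     (\<forall>A\<in>sets M. emeasure M A = (SUP K\<in>{K. compact K \<and> K \<subseteq> A}. emeasure M K))"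

definition pair_meas :: "('x::topological_space \<Rightarrow> complex) \<Rightarrow> 'x measure \<Rightarrow> complex" where
  "pair_meas v q = integral\<^sup>L q v"

text \<open>Elements of I_mu(X) are represented by their (real, mu-integrable) density h,
  i.e. q = h mu.  Pairing and total variation norm:\<close>
definition in_I :: "'x::topological_space measure \<Rightarrow> ('x \<Rightarrow> real) \<Rightarrow> bool" where
  "in_I \<mu> h \<longleftrightarrow> h \<in> borel_measurable \<mu> \<and> integrable \<mu> h"

definition pair_dens :: "'x::topological_space measure \<Rightarrow> ('x \<Rightarrow> complex) \<Rightarrow> ('x \<Rightarrow> real) \<Rightarrow> complex" where
  "pair_dens \<mu> v h = (\<integral>x. v x * complex_of_real (h x) \<partial>\<mu>)"

definition tv_norm_dens :: "'x::topological_space measure \<Rightarrow> ('x \<Rightarrow> real) \<Rightarrow> real" where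
  "tv_norm_dens \<mu> h = (\<integral>x. \<bar>h x\<bar> \<partial>\<mu>)"

definition separable_map ::
  "(complex \<Rightarrow> 'h::real_normed_vector \<Rightarrow> 'h) \<Rightarrow> ('h \<Rightarrow> 'h \<Rightarrow> complex) \<Rightarrow> ('h \<Rightarrow> 'h) \<Rightarrow> 'h
   \<Rightarrow> (('x::topological_space \<Rightarrow> complex) \<Rightarrow> 'h) \<Rightarrow> bool" where
  "separable_map cmul ip star e \<phi> \<longleftrightarrow>
     lin_map cmul \<phi> \<and>
     (\<exists>(q::nat \<Rightarrow> 'x measure) (p::nat \<Rightarrow> 'h).
        (\<forall>l. radon_measure (q l)) \<and> (\<forall>l. p l \<in> unital_cone ip star e) \<and>
        (\<forall>v\<in>CX. (\<lambda>k. \<Sum>l<k. cmul (pair_meas v (q l)) (p l)) \<longlonglongrightarrow> \<phi> v))"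

definition nuclear_morphism ::
  "(complex \<Rightarrow> 'h::real_normed_vector \<Rightarrow> 'h) \<Rightarrow> ('h \<Rightarrow> 'h) \<Rightarrow> 'x::topological_space measure
   \<Rightarrow> (('x \<Rightarrow> complex) \<Rightarrow> 'h) \<Rightarrow> bool" where
  "nuclear_morphism cmul star \<mu> T \<longleftrightarrow>
     (\<exists>(\<gamma>::nat \<Rightarrow> 'h) (h::nat \<Rightarrow> 'x \<Rightarrow> real).
        (\<forall>l. \<gamma> l \<in> hermitian star \<and> norm (\<gamma> l) \<le> 1) \<and>
        (\<forall>l. in_I \<mu> (h l)) \<and> summable (\<lambda>l. tv_norm_dens \<mu> (h l)) \<and>
        (\<forall>v\<in>CX. (\<lambda>k. \<Sum>l<k. cmul (pair_dens \<mu> v (h l)) (\<gamma> l)) \<longlonglongrightarrow> T v))"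

end

theory Submission
  imports Defs
begin

text \<open>
  (\<Rightarrow>) Write T = \<Sum> \<gamma>_l \<odot> d_l \<mu> and split each density as d_l = d_l+ - d_l-. Adding
  e \<odot> 2|d_l| \<mu> gives
    \<gamma>_l \<odot> d_l \<mu> + e \<odot> 2|d_l| \<mu> = (\<gamma>_l + 2e) \<odot> d_l+ \<mu> + (-\<gamma>_l + 2e) \<odot> d_l- \<mu>,
  and \<gamma> + 2e, -\<gamma> + 2e lie in the unital cone whenever \<gamma> is hermitian of norm at most 1.
  So T + e \<odot> q is separable for the positive q = \<Sum> 2|d_l| \<mu>.

  (\<Leftarrow>) If T + e \<odot> q = \<Sum> p_l \<odot> q_l is separable, pairing with e gives
  \<Sum> (p_l,e) q_l = \<mu> + q on continuous functions. Since (p_l,e) > 0 whenever p_l \<noteq> 0,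
  Urysohn's lemma and inner regularity make each such q_l absolutely continuous with
  respect to \<mu>, so q_l = D_l \<mu> by Radon-Nikodym. The cone inequality
  \<parallel>p_l\<parallel> \<le> \<surd>2 (p_l,e) bounds \<Sum> \<parallel>p_l\<parallel> \<parallel>q_l\<parallel> by \<surd>2 (\<mu> + q)(1), so normalising the p_l and
  moving e \<odot> q back to the other side gives a nuclear decomposition of T.
\<close>

section \<open>Hilbert *-spaces\<close>

locale hilbert_star =
  fixes cmul :: "complex \<Rightarrow> 'h::banach \<Rightarrow> 'h"
    and ip :: "'h \<Rightarrow> 'h \<Rightarrow> complex"
    and star :: "'h \<Rightarrow> 'h"
  assumes hilbert_star_space: "hilbert_star_space cmul ip star"
begin

lemma cmul_of_real: "cmul (complex_of_real r) x = r *\<^sub>R x"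
  and cmul_add_left: "cmul (a + b) x = cmul a x + cmul b x"
  and cmul_add_right: "cmul a (x + y) = cmul a x + cmul a y"
  and cmul_cmul: "cmul (a * b) x = cmul a (cmul b x)"
  and ip_add_left: "ip (x + y) z = ip x z + ip y z"
  and ip_cmul_left: "ip (cmul a x) y = a * ip x y"
  and ip_commute: "ip y x = cnj (ip x y)"
  and norm_eq_sqrt_ip: "norm x = sqrt (Re (ip x x))"
  and star_add: "star (x + y) = star x + star y"
  and star_cmul: "star (cmul a x) = cmul (cnj a) (star x)"
  using hilbert_star_space unfolding hilbert_star_space_def by - (metis+)

sublocale module cmul
  using cmul_of_real[of 1] by unfold_locales (simp_all add: cmul_add_left cmul_add_right cmul_cmul)

lemma ip_add_right: "ip z (x + y) = ip z x + ip z y"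
  by (metis ip_commute ip_add_left complex_cnj_add)

lemma ip_cmul_right: "ip x (cmul a y) = cnj a * ip x y"
  by (metis ip_commute ip_cmul_left complex_cnj_mult)

lemma ip_scaleR_left: "ip (r *\<^sub>R x) y = complex_of_real r * ip x y"
  using ip_cmul_left[of "complex_of_real r"] by (simp add: cmul_of_real)

lemma ip_scaleR_right: "ip x (r *\<^sub>R y) = complex_of_real r * ip x y"
  using ip_cmul_right[of x "complex_of_real r"] by (simp add: cmul_of_real)

lemma ip_self: "ip x x = complex_of_real ((norm x)\<^sup>2)"
proof -
  have "Im (ip x x) = Im (cnj (ip x x))"
    using ip_commute[of x x] by simp
  moreover have "0 \<le> Re (ip x x)"
    using norm_eq_sqrt_ip[of x] norm_ge_zero[of x] by simp
  ultimately show ?thesis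
    by (simp add: norm_eq_sqrt_ip complex_eq_iff)
qed

lemma norm_cmul: "norm (cmul c x) = cmod c * norm x"
proof -
  have "ip (cmul c x) (cmul c x) = (c * cnj c) * ip x x"
    by (simp add: ip_cmul_left ip_cmul_right)
  then have "(norm (cmul c x))\<^sup>2 = (cmod c * norm x)\<^sup>2"
    unfolding ip_self complex_norm_square[symmetric] power_mult_distrib
    by (metis of_real_mult of_real_eq_iff)
  then show ?thesis by (simp add: power2_eq_iff_nonneg)
qed

lemma norm_add_square: "(norm (x + y))\<^sup>2 = (norm x)\<^sup>2 + (norm y)\<^sup>2 + 2 * Re (ip x y)"
proof -
  have "complex_of_real ((norm (x + y))\<^sup>2) = ip x x + ip y y + ip x y + ip y x"
    by (simp only: ip_self[symmetric] ip_add_left ip_add_right) (simp add: algebra_simps)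
  then have "(norm (x + y))\<^sup>2 = Re (ip x x + ip y y + ip x y + ip y x)"
    by (metis Re_complex_of_real)
  then show ?thesis
    using ip_commute[of x y] by (simp add: ip_self)
qed

lemma Re_ip_le: "\<bar>Re (ip x y)\<bar> \<le> norm x * norm y"
proof -
  have "(norm (x + y))\<^sup>2 \<le> (norm x + norm y)\<^sup>2"
    by (intro power_mono norm_triangle_ineq) simp
  then have "Re (ip x y) \<le> norm x * norm y"
    using norm_add_square[of x y] by (simp add: power2_sum)
  moreover have "(norm (x - y))\<^sup>2 \<le> (norm x + norm y)\<^sup>2"
    by (intro power_mono norm_triangle_ineq4) simp
  then have "- Re (ip x y) \<le> norm x * norm y"
    using norm_add_square[of x "- y"] ip_scaleR_right[of x "-1" y] by (simp add: power2_sum)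
  ultimately show ?thesis by linarith
qed

lemma Re_ip_tendsto_left:
  assumes "(f \<longlongrightarrow> l) F"
  shows "((\<lambda>n. Re (ip (f n) y)) \<longlongrightarrow> Re (ip l y)) F"
proof -
  have eq: "Re (ip x y) = ((norm (x + y))\<^sup>2 - (norm x)\<^sup>2 - (norm y)\<^sup>2) / 2" for x
    using norm_add_square[of x y] by simp
  show ?thesis
    unfolding eq by (intro tendsto_intros assms) simp
qed

lemma ip_sum_left: "ip (\<Sum>i\<in>A. f i) y = (\<Sum>i\<in>A. ip (f i) y)"
  by (induction A rule: infinite_finite_induct) (auto simp: ip_add_left ip_scaleR_left[of 0, simplified])

lemma cmul_tendsto: "(f \<longlongrightarrow> c) F \<Longrightarrow> ((\<lambda>n. cmul (f n) x) \<longlongrightarrow> cmul c x) F"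
proof -
  assume "(f \<longlongrightarrow> c) F"
  then have "((\<lambda>n. norm (f n - c) * norm x) \<longlongrightarrow> 0) F"
    by (intro tendsto_mult_left_zero tendsto_norm_zero) (simp add: LIM_zero)
  then have "((\<lambda>n. cmul (f n) x - cmul c x) \<longlongrightarrow> 0) F"
    by (rule tendsto_norm_zero_cancel[OF Lim_null_comparison[rotated]])
       (auto simp: norm_cmul scale_left_diff_distrib[symmetric])
  then show ?thesis by (simp add: LIM_zero_iff)
qed

lemma hermitian_zero: "0 \<in> hermitian star"
  using star_add[of 0 0] unfolding hermitian_def by simp

lemma hermitian_add: "x \<in> hermitian star \<Longrightarrow> y \<in> hermitian star \<Longrightarrow> x + y \<in> hermitian star"
  unfolding hermitian_def by (simp add: star_add)

lemma hermitian_scaleR: "x \<in> hermitian star \<Longrightarrow> r *\<^sub>R x \<in> hermitian star"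
  unfolding hermitian_def using star_cmul[of "complex_of_real r"] by (simp add: cmul_of_real)

lemma hermitian_uminus: "x \<in> hermitian star \<Longrightarrow> - x \<in> hermitian star"
  using hermitian_scaleR[of x "-1"] by simp

end

locale unital_hilbert_star = hilbert_star cmul ip star
  for cmul :: "complex \<Rightarrow> 'h::banach \<Rightarrow> 'h" and ip star +
  fixes e :: 'h
  assumes e_hermitian: "e \<in> hermitian star"
    and norm_e: "norm e = 1"
begin

lemma ip_e_e: "ip e e = 1"
  using ip_self[of e] norm_e by simp

lemma unital_cone_Re_ip: "p \<in> unital_cone ip star e \<Longrightarrow> norm p \<le> sqrt 2 * Re (ip p e)"
  unfolding unital_cone_def by auto

lemma unital_cone_Re_ip_nonneg: "p \<in> unital_cone ip star e \<Longrightarrow> 0 \<le> Re (ip p e)"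
  using order_trans[OF norm_ge_zero unital_cone_Re_ip] by (simp add: zero_le_mult_iff)

lemma hermitian_add_2e_in_cone:
  assumes g: "g \<in> hermitian star" "norm g \<le> 1"
  shows "g + 2 *\<^sub>R e \<in> unital_cone ip star e"
proof -
  define a where "a = Re (ip g e)"
  have a: "\<bar>a\<bar> \<le> 1" using Re_ip_le[of g e] g(2) norm_e unfolding a_def by simp
  have "(norm g)\<^sup>2 \<le> 1" using g(2) by (simp add: power_le_one)
  then have "(norm (g + 2 *\<^sub>R e))\<^sup>2 \<le> (sqrt 2 * (a + 2))\<^sup>2"
    using norm_add_square[of g "2 *\<^sub>R e"] norm_e zero_le_power2[of "a + 1"]
    by (simp add: ip_scaleR_right a_def power_mult_distrib power2_eq_square algebra_simps)
  then have "norm (g + 2 *\<^sub>R e) \<le> sqrt 2 * (a + 2)"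
    by (rule power2_le_imp_le) (use a in auto)
  moreover have "Re (ip (g + 2 *\<^sub>R e) e) = a + 2"
    by (simp add: ip_add_left ip_scaleR_left ip_e_e a_def)
  ultimately show ?thesis
    unfolding unital_cone_def using g e_hermitian by (auto intro: hermitian_add hermitian_scaleR)
qed

end

section \<open>Radon measures\<close>

lemma radon_measure_space: "radon_measure M \<Longrightarrow> space M = UNIV"
  unfolding radon_measure_def by (metis sets_eq_imp_space_eq space_borel)

lemma radon_measure_compact_sets: "radon_measure M \<Longrightarrow> compact (K::'x::t2_space set) \<Longrightarrow> K \<in> sets M"
  unfolding radon_measure_def by (simp add: borel_closed compact_imp_closed)

lemma radon_measure_inner_approx:
  fixes M :: "'x::t2_space measure"
  assumes M: "radon_measure M" and A: "A \<in> sets M" and e: "e > 0"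
  obtains K where "compact K" "K \<subseteq> A" "measure M A < measure M K + e"
proof -
  interpret finite_measure M using M unfolding radon_measure_def by blast
  show ?thesis
  proof (cases "measure M A - e < 0")
    case True
    then show ?thesis by (intro that[of "{}"]) auto
  next
    case False
    have "ennreal (measure M A - e) < ennreal (measure M A)"
      using False e by (subst ennreal_less_iff) auto
    also have "\<dots> = (SUP K\<in>{K. compact K \<and> K \<subseteq> A}. emeasure M K)"
      using M A unfolding radon_measure_def by (simp add: emeasure_eq_measure)
    finally obtain K where K: "compact K" "K \<subseteq> A" "ennreal (measure M A - e) < emeasure M K"
      by (auto simp: less_SUP_iff)
    then have "measure M A - e < measure M K"
      using False ennreal_less_iff[of "measure M A - e" "measure M K"] by (simp add: emeasure_eq_measure)
    with K show ?thesis by (intro that[of K]) auto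
  qed
qed

lemma radon_measureI:
  fixes M :: "'x::t2_space measure"
  assumes sets: "sets M = sets borel" and fin: "finite_measure M"
    and approx: "\<And>A e. A \<in> sets M \<Longrightarrow> e > 0 \<Longrightarrow> \<exists>K. compact K \<and> K \<subseteq> A \<and> measure M A < measure M K + e"
  shows "radon_measure M"
proof -
  interpret finite_measure M by (rule fin)
  have "emeasure M A = (SUP K\<in>{K. compact K \<and> K \<subseteq> A}. emeasure M K)" if A: "A \<in> sets M" for A
  proof (rule antisym)
    show "emeasure M A \<le> (SUP K\<in>{K. compact K \<and> K \<subseteq> A}. emeasure M K)"
    proof (rule ennreal_le_epsilon)
      fix e :: real assume e: "0 < e"
      obtain K where K: "compact K" "K \<subseteq> A" "measure M A < measure M K + e"
        using approx[OF A e] by blast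
      have "emeasure M A \<le> ennreal (measure M K) + ennreal e"
        using K e by (simp add: emeasure_eq_measure ennreal_plus[symmetric] del: ennreal_plus)
      also have "ennreal (measure M K) \<le> (SUP K\<in>{K. compact K \<and> K \<subseteq> A}. emeasure M K)"
        using K by (intro SUP_upper2[of K]) (auto simp: emeasure_eq_measure)
      finally show "emeasure M A \<le> (SUP K\<in>{K. compact K \<and> K \<subseteq> A}. emeasure M K) + ennreal e"
        by simp
    qed
    show "(SUP K\<in>{K. compact K \<and> K \<subseteq> A}. emeasure M K) \<le> emeasure M A"
      using A sets by (intro SUP_least emeasure_mono) (auto simp: borel_closed compact_imp_closed)
  qed
  then show ?thesis using sets fin unfolding radon_measure_def by blast
qed

lemma radon_absolutely_continuousI:
  fixes \<mu> Q :: "'x::t2_space measure"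
  assumes \<mu>: "radon_measure \<mu>" and Q: "radon_measure Q"
    and compact_null: "\<And>K. compact K \<Longrightarrow> K \<in> null_sets \<mu> \<Longrightarrow> emeasure Q K = 0"
  shows "absolutely_continuous \<mu> Q"
  unfolding absolutely_continuous_def
proof
  fix N assume N: "N \<in> null_sets \<mu>"
  have NQ: "N \<in> sets Q" using N \<mu> Q unfolding radon_measure_def by auto
  have "emeasure Q N = (SUP K\<in>{K. compact K \<and> K \<subseteq> N}. emeasure Q K)"
    using Q NQ unfolding radon_measure_def by blast
  also have "\<dots> = 0"
  proof (rule SUP_eq_const)
    fix K assume "K \<in> {K. compact K \<and> K \<subseteq> N}"
    then have "compact K" "K \<subseteq> N" by auto
    then show "emeasure Q K = 0"
      using compact_null null_sets_subset[OF N] radon_measure_compact_sets[OF \<mu>] by blast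
  qed auto
  finally show "N \<in> null_sets Q" using NQ by (intro null_setsI)
qed

lemma emeasure_density_integral:
  assumes f: "integrable M f" "\<And>x. 0 \<le> f x" and A: "A \<in> sets M"
  shows "emeasure (density M (\<lambda>x. ennreal (f x))) A = ennreal (\<integral>x. f x * indicator A x \<partial>M)"
proof -
  have "emeasure (density M (\<lambda>x. ennreal (f x))) A = (\<integral>\<^sup>+x. ennreal (f x * indicator A x) \<partial>M)"
    using A f by (subst emeasure_density) (auto intro!: nn_integral_cong split: split_indicator)
  also have "\<dots> = ennreal (\<integral>x. f x * indicator A x \<partial>M)"
    using integrable_mult_indicator[OF A f(1)] f(2)
    by (intro nn_integral_eq_integral) (auto simp: mult.commute split: split_indicator)
  finally show ?thesis .
qed

lemma measure_density_integral:
  assumes f: "integrable M f" "\<And>x. 0 \<le> f x" and A: "A \<in> sets M"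
  shows "measure (density M (\<lambda>x. ennreal (f x))) A = (\<integral>x. f x * indicator A x \<partial>M)"
  unfolding measure_def using emeasure_density_integral[OF assms] f
  by (simp add: integral_nonneg_AE)

lemma finite_measure_density:
  assumes "integrable M f" "\<And>x. 0 \<le> f x"
  shows "finite_measure (density M (\<lambda>x. ennreal (f x)))"
  by (rule finite_measureI) (simp add: emeasure_density_integral[OF assms])

lemma radon_measure_density:
  fixes \<mu> :: "'x::t2_space measure"
  assumes \<mu>: "radon_measure \<mu>" and f: "integrable \<mu> f" "\<And>x. 0 \<le> f x"
  shows "radon_measure (density \<mu> (\<lambda>x. ennreal (f x)))" (is "radon_measure ?\<nu>")
proof (rule radon_measureI)
  interpret M: finite_measure \<mu> using \<mu> unfolding radon_measure_def by blast
  interpret N: finite_measure ?\<nu> by (rule finite_measure_density[OF f])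
  show "sets ?\<nu> = sets borel" using \<mu> unfolding radon_measure_def by simp
  show "finite_measure ?\<nu>" by (rule N.finite_measure_axioms)
  fix A e assume A: "A \<in> sets ?\<nu>" and e: "(e::real) > 0"
  then have A\<mu>: "A \<in> sets \<mu>" by simp
  have "\<forall>n. \<exists>K. compact K \<and> K \<subseteq> A \<and> measure \<mu> A < measure \<mu> K + 1 / real (Suc n)"
    by (metis radon_measure_inner_approx[OF \<mu> A\<mu>] of_nat_0_less_iff zero_less_Suc divide_pos_pos zero_less_one)
  then obtain K where K: "\<And>n. compact (K n)" "\<And>n. K n \<subseteq> A"
    "\<And>n. measure \<mu> A < measure \<mu> (K n) + 1 / real (Suc n)"
    by metis
  define L where "L n = (\<Union>i\<le>n. K i)" for n
  have L: "compact (L n)" "L n \<subseteq> A" "L n \<in> sets \<mu>" for n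
    unfolding L_def using K radon_measure_compact_sets[OF \<mu>] by (auto intro!: compact_UN)
  have Ks: "K n \<in> sets \<mu>" for n using radon_measure_compact_sets[OF \<mu> K(1)] .
  define D where "D = (\<Inter>n. A - L n)"
  have D_small: "measure \<mu> D \<le> 1 / real (Suc n)" for n
  proof -
    have "measure \<mu> D \<le> measure \<mu> (A - K n)"
      unfolding D_def L_def using A\<mu> Ks by (intro M.finite_measure_mono) auto
    also have "\<dots> = measure \<mu> A - measure \<mu> (K n)"
      using A\<mu> Ks K(2) by (intro M.finite_measure_Diff) auto
    finally show ?thesis using K(3)[of n] by simp
  qed
  have "measure \<mu> D \<le> 0"
  proof (rule ccontr)
    assume "\<not> measure \<mu> D \<le> 0"
    then obtain n where "1 / real (Suc n) < measure \<mu> D"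
      by (metis nat_approx_posE not_le)
    with D_small[of n] show False by simp
  qed
  then have "D \<in> null_sets \<mu>"
    unfolding D_def using A\<mu> L(3) measure_nonneg[of \<mu>]
    by (intro null_setsI) (auto simp: M.emeasure_eq_measure intro: antisym)
  then have "D \<in> null_sets ?\<nu>"
    using f by (subst null_sets_density_iff) (auto intro: AE_mp[OF AE_not_in])
  then have "measure ?\<nu> D = 0" by (simp add: measure_def null_setsD1)
  moreover have "(\<lambda>n. measure ?\<nu> (A - L n)) \<longlonglongrightarrow> measure ?\<nu> D"
    unfolding D_def using A\<mu> L(3)
    by (intro N.finite_Lim_measure_decseq) (auto simp: decseq_def L_def)
  ultimately obtain n where "measure ?\<nu> (A - L n) < e"
    using e by (metis order_tendstoD(2) eventually_sequentially order_refl)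
  moreover have "measure ?\<nu> (A - L n) = measure ?\<nu> A - measure ?\<nu> (L n)"
    using A\<mu> L by (intro N.finite_measure_Diff) auto
  ultimately show "\<exists>K. compact K \<and> K \<subseteq> A \<and> measure ?\<nu> A < measure ?\<nu> K + e"
    using L by (intro exI[of _ "L n"]) auto
qed

lemma absolutely_continuous_real_density:
  assumes \<mu>: "finite_measure \<mu>" and Q: "finite_measure Q"
    and ac: "absolutely_continuous \<mu> Q" and sets: "sets Q = sets \<mu>"
  obtains D where "D \<in> borel_measurable \<mu>" "\<And>x. 0 \<le> D x" "integrable \<mu> D"
    "density \<mu> (\<lambda>x. ennreal (D x)) = Q"
proof -
  interpret finite_measure \<mu> by (rule \<mu>)
  define D where "D x = enn2real (RN_deriv \<mu> Q x)" for x
  have D[measurable]: "D \<in> borel_measurable \<mu>" unfolding D_def by measurable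
  have "AE x in \<mu>. RN_deriv \<mu> Q x \<noteq> \<infinity>"
    using Q by (intro RN_deriv_finite[OF _ ac sets]) (rule finite_measure.axioms(1))
  then have "density \<mu> (\<lambda>x. ennreal (D x)) = density \<mu> (RN_deriv \<mu> Q)"
    by (intro density_cong) (auto simp: D_def top.not_eq_extremum elim!: AE_mp)
  also have "\<dots> = Q" by (rule density_RN_deriv[OF ac sets])
  finally have dQ: "density \<mu> (\<lambda>x. ennreal (D x)) = Q" .
  have "(\<integral>\<^sup>+x. ennreal (D x) \<partial>\<mu>) = emeasure Q (space Q)"
    using dQ sets_eq_imp_space_eq[OF sets] by (subst dQ[symmetric], subst emeasure_density) auto
  also have "\<dots> < \<infinity>" using finite_measure.emeasure_finite[OF Q] by (simp add: less_top)
  finally have "integrable \<mu> D" by (intro integrableI_nonneg) (auto simp: D_def)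
  show ?thesis by (rule that[OF D _ \<open>integrable \<mu> D\<close> dQ]) (simp add: D_def)
qed

lemma radon_measure_real_densities:
  fixes \<mu> :: "'x::t2_space measure" and q :: "nat \<Rightarrow> 'x measure"
  assumes \<mu>: "radon_measure \<mu>" and q: "\<And>l. radon_measure (q l)"
    and ac: "\<And>l. P l \<Longrightarrow> absolutely_continuous \<mu> (q l)"
  shows "\<exists>D. \<forall>l. P l \<longrightarrow> integrable \<mu> (D l) \<and> (\<forall>x. 0 \<le> D l x) \<and>
           density \<mu> (\<lambda>x. ennreal (D l x)) = q l"
proof (rule choice, rule allI)
  fix l
  show "\<exists>D. P l \<longrightarrow> integrable \<mu> D \<and> (\<forall>x. 0 \<le> D x) \<and> density \<mu> (\<lambda>x. ennreal (D x)) = q l"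
  proof (cases "P l")
    case True
    have fin: "finite_measure \<mu>" "finite_measure (q l)" and sets: "sets (q l) = sets \<mu>"
      using \<mu> q[of l] unfolding radon_measure_def by auto
    obtain D where "D \<in> borel_measurable \<mu>" "\<And>x. 0 \<le> D x" "integrable \<mu> D"
      "density \<mu> (\<lambda>x. ennreal (D x)) = q l"
      using absolutely_continuous_real_density[OF fin ac[OF True] sets] by blast
    then show ?thesis by blast
  qed simp
qed

lemma Hausdorff_space_euclidean_t2: "Hausdorff_space (euclidean :: 'x::t2_space topology)"
  unfolding Hausdorff_space_def disjnt_def using hausdorff by fastforce

lemma Urysohn_compact_t2:
  fixes K C :: "'x::t2_space set"
  assumes X: "compact (UNIV :: 'x set)" and K: "compact K" and C: "compact C" and disj: "K \<inter> C = {}"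
  obtains F :: "'x \<Rightarrow> real" where "continuous_on UNIV F" "\<And>x. 0 \<le> F x" "\<And>x. F x \<le> 1"
    "\<And>x. x \<in> K \<Longrightarrow> F x = 1" "\<And>x. x \<in> C \<Longrightarrow> F x = 0"
proof -
  have "normal_space (euclidean :: 'x topology)"
    by (rule compact_Hausdorff_or_regular_imp_normal_space)
       (use X Hausdorff_space_euclidean_t2 in \<open>auto simp: compact_space_def\<close>)
  then obtain F where F: "continuous_map euclidean (top_of_set {0..1::real}) F" "F ` C \<subseteq> {0}" "F ` K \<subseteq> {1}"
    using Urysohn_lemma[of euclidean C K 0 1] K C disj by (auto simp: disjnt_def compact_imp_closed)
  then have "continuous_on UNIV F" "\<And>x. F x \<in> {0..1}"
    unfolding continuous_map_in_subtopology by auto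
  with F(2,3) show ?thesis by (intro that[of F]) auto
qed

section \<open>Pairing continuous functions with densities\<close>

lemma CX_borel_measurable: "v \<in> CX \<Longrightarrow> sets M = sets borel \<Longrightarrow> v \<in> borel_measurable M"
  unfolding CX_def using borel_measurable_continuous_onI measurable_cong_sets by blast

lemma CX_bounded:
  assumes "compact (UNIV :: 'x::topological_space set)" "v \<in> CX"
  obtains B where "\<And>x::'x. cmod (v x) \<le> B"
proof -
  have "compact (range v)" using assms unfolding CX_def by (intro compact_continuous_image) auto
  then show ?thesis using that by (meson compact_imp_bounded bounded_iff rangeI)
qed

lemma integrable_scaleR_bounded:
  fixes v :: "'x \<Rightarrow> 'b::{banach, second_countable_topology}"
  assumes h: "integrable M h" and v: "v \<in> borel_measurable M" and B: "\<And>x. norm (v x) \<le> B"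
  shows "integrable M (\<lambda>x. h x *\<^sub>R v x)"
proof (rule Bochner_Integration.integrable_bound)
  show "integrable M (\<lambda>x. B * \<bar>h x\<bar>)" using h by auto
  show "(\<lambda>x. h x *\<^sub>R v x) \<in> borel_measurable M" using h v by measurable
  have "norm (h x *\<^sub>R v x) \<le> B * \<bar>h x\<bar>" for x
    using mult_left_mono[OF B abs_ge_zero] by (simp add: mult.commute)
  then show "AE x in M. norm (h x *\<^sub>R v x) \<le> norm (B * \<bar>h x\<bar>)"
    by (auto intro: order_trans[OF _ abs_ge_self])
qed

lemma norm_integral_scaleR_bounded_le:
  fixes v :: "'x \<Rightarrow> 'b::{banach, second_countable_topology}"
  assumes h: "integrable M h" and v: "v \<in> borel_measurable M" and B: "\<And>x. norm (v x) \<le> B"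
  shows "norm (\<integral>x. h x *\<^sub>R v x \<partial>M) \<le> B * (\<integral>x. \<bar>h x\<bar> \<partial>M)"
proof -
  have "norm (\<integral>x. h x *\<^sub>R v x \<partial>M) \<le> (\<integral>x. norm (h x *\<^sub>R v x) \<partial>M)"
    by (rule integral_norm_bound)
  also have "\<dots> \<le> (\<integral>x. B * \<bar>h x\<bar> \<partial>M)"
    using integrable_norm[OF integrable_scaleR_bounded[OF assms]] h mult_left_mono[OF B abs_ge_zero]
    by (intro integral_mono) (auto simp: mult.commute)
  finally show ?thesis by simp
qed

lemma pair_dens_eq_integral_scaleR: "pair_dens M v h = (\<integral>x. h x *\<^sub>R v x \<partial>M)"
  unfolding pair_dens_def by (simp add: scaleR_conv_of_real mult.commute)

lemma pair_dens_lincomb: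
  assumes f: "integrable M f" and g: "integrable M g"
    and v: "v \<in> borel_measurable M" and B: "\<And>x. cmod (v x) \<le> B"
  shows "pair_dens M v (\<lambda>x. a * f x + b * g x) = of_real a * pair_dens M v f + of_real b * pair_dens M v g"
proof -
  have "pair_dens M v (\<lambda>x. a * f x + b * g x) = (\<integral>x. a *\<^sub>R (f x *\<^sub>R v x) + b *\<^sub>R (g x *\<^sub>R v x) \<partial>M)"
    unfolding pair_dens_eq_integral_scaleR by (simp add: scaleR_add_left)
  also have "\<dots> = of_real a * pair_dens M v f + of_real b * pair_dens M v g"
    using integrable_scaleR_bounded[OF f v B] integrable_scaleR_bounded[OF g v B]
    by (simp add: pair_dens_eq_integral_scaleR scaleR_conv_of_real)
  finally show ?thesis .
qed

lemma pair_dens_add: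
  assumes h: "integrable M h"
    and v: "v \<in> borel_measurable M" "\<And>x. cmod (v x) \<le> B"
    and w: "w \<in> borel_measurable M" "\<And>x. cmod (w x) \<le> C"
  shows "pair_dens M (\<lambda>x. v x + w x) h = pair_dens M v h + pair_dens M w h"
  using integrable_scaleR_bounded[OF h v] integrable_scaleR_bounded[OF h w]
  by (simp add: pair_dens_eq_integral_scaleR scaleR_add_right)

lemma pair_dens_mult: "pair_dens M (\<lambda>x. c * v x) h = c * pair_dens M v h"
  unfolding pair_dens_def by (simp add: mult.assoc)

lemma pair_meas_density:
  assumes "f \<in> borel_measurable M" "\<And>x. 0 \<le> f x" "v \<in> borel_measurable M"
  shows "pair_meas v (density M (\<lambda>x. ennreal (f x))) = pair_dens M v f"
  unfolding pair_meas_def pair_dens_eq_integral_scaleR using assms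
  by (subst integral_density) auto

lemma AE_summable_abs_of_summable_integral:
  fixes f :: "nat \<Rightarrow> 'x \<Rightarrow> real"
  assumes f: "\<And>l. integrable M (f l)" and sum: "summable (\<lambda>l. \<integral>x. \<bar>f l x\<bar> \<partial>M)"
  shows "AE x in M. summable (\<lambda>l. \<bar>f l x\<bar>)"
proof -
  have [measurable]: "f l \<in> borel_measurable M" for l using f by auto
  have "(\<integral>\<^sup>+x. (\<Sum>l. ennreal \<bar>f l x\<bar>) \<partial>M) = (\<Sum>l. \<integral>\<^sup>+x. ennreal \<bar>f l x\<bar> \<partial>M)"
    by (rule nn_integral_suminf) measurable
  also have "\<dots> = (\<Sum>l. ennreal (\<integral>x. \<bar>f l x\<bar> \<partial>M))"
    using f by (intro suminf_cong nn_integral_eq_integral) auto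
  also have "\<dots> = ennreal (\<Sum>l. \<integral>x. \<bar>f l x\<bar> \<partial>M)"
    by (rule suminf_ennreal2[OF _ sum]) simp
  finally have "AE x in M. (\<Sum>l. ennreal \<bar>f l x\<bar>) \<noteq> \<infinity>"
    by (intro nn_integral_PInf_AE) auto
  then show ?thesis
    by (rule AE_mp) (auto intro!: AE_I2 summable_suminf_not_top)
qed

lemma pair_dens_suminf:
  fixes g :: "nat \<Rightarrow> 'x::topological_space \<Rightarrow> real"
  assumes g: "\<And>l. integrable M (g l)" "\<And>l x. 0 \<le> g l x"
    and sum: "summable (\<lambda>l. \<integral>x. g l x \<partial>M)"
    and v: "v \<in> borel_measurable M" and B: "\<And>x. cmod (v x) \<le> B"
  shows "(\<lambda>l. pair_dens M v (g l)) sums pair_dens M v (\<lambda>x. \<Sum>l. g l x)"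
proof -
  have AE: "AE x in M. summable (\<lambda>l. g l x)"
    using AE_summable_abs_of_summable_integral[OF g(1)] sum g(2) by simp
  have "summable (\<lambda>l. \<integral>x. norm (g l x *\<^sub>R v x) \<partial>M)"
  proof (rule summable_comparison_test)
    show "summable (\<lambda>l. B * \<integral>x. g l x \<partial>M)" by (intro summable_mult sum)
    have "(\<integral>x. norm (g l x *\<^sub>R v x) \<partial>M) \<le> (\<integral>x. B * g l x \<partial>M)" for l
      using integrable_norm[OF integrable_scaleR_bounded[OF g(1) v B]] g mult_left_mono[OF B g(2)]
      by (intro integral_mono) (auto simp: mult.commute)
    then show "\<exists>N. \<forall>l\<ge>N. norm (\<integral>x. norm (g l x *\<^sub>R v x) \<partial>M) \<le> B * \<integral>x. g l x \<partial>M"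
      by simp
  qed
  moreover have "AE x in M. summable (\<lambda>l. norm (g l x *\<^sub>R v x))"
    using AE by (rule AE_mp) (auto intro!: AE_I2 summable_mult2 simp: g(2))
  ultimately have "(\<lambda>l. pair_dens M v (g l)) sums (\<integral>x. (\<Sum>l. g l x *\<^sub>R v x) \<partial>M)"
    unfolding pair_dens_eq_integral_scaleR
    by (intro sums_integral integrable_scaleR_bounded[OF g(1) v B])
  also have "(\<integral>x. (\<Sum>l. g l x *\<^sub>R v x) \<partial>M) = pair_dens M v (\<lambda>x. \<Sum>l. g l x)"
    unfolding pair_dens_eq_integral_scaleR
  proof (rule integral_cong_AE)
    show "AE x in M. (\<Sum>l. g l x *\<^sub>R v x) = (\<Sum>l. g l x) *\<^sub>R v x"
      using AE by (rule AE_mp) (auto intro!: AE_I2 simp: suminf_scaleR_left)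
  qed (use g(1) v in measurable)
  finally show ?thesis .
qed

lemma integrable_suminf_nonneg:
  fixes g :: "nat \<Rightarrow> 'x \<Rightarrow> real"
  assumes g: "\<And>l. integrable M (g l)" "\<And>l x. 0 \<le> g l x"
    and sum: "summable (\<lambda>l. \<integral>x. g l x \<partial>M)"
  shows "integrable M (\<lambda>x. \<Sum>l. g l x)"
  using AE_summable_abs_of_summable_integral[OF g(1)] sum g
  by (intro integrable_suminf) auto

lemma LIMSEQ_even_odd:
  fixes X :: "nat \<Rightarrow> 'a::metric_space"
  assumes "(\<lambda>k. X (2*k)) \<longlonglongrightarrow> L" "(\<lambda>k. X (2*k+1)) \<longlonglongrightarrow> L"
  shows "X \<longlonglongrightarrow> L"
proof (rule metric_LIMSEQ_I)
  fix r :: real assume r: "0 < r"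
  obtain N1 where N1: "\<And>k. k \<ge> N1 \<Longrightarrow> dist (X (2*k)) L < r"
    using metric_LIMSEQ_D[OF assms(1) r] by auto
  obtain N2 where N2: "\<And>k. k \<ge> N2 \<Longrightarrow> dist (X (2*k+1)) L < r"
    using metric_LIMSEQ_D[OF assms(2) r] by auto
  have "dist (X n) L < r" if "n \<ge> 2 * (N1 + N2)" for n
    using that N1[of "n div 2"] N2[of "n div 2"] by (cases "even n") (auto elim!: evenE oddE)
  then show "\<exists>N. \<forall>n\<ge>N. dist (X n) L < r" by blast
qed

lemma sum_lessThan_mult_2: "(\<Sum>m<2*k. t m) = (\<Sum>l<k. t (2*l) + t (2*l+1))"
  for t :: "nat \<Rightarrow> 'a::comm_monoid_add"
  by (induction k) (simp_all add: add.assoc)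

lemma LIMSEQ_interleaved_partial_sums:
  fixes t :: "nat \<Rightarrow> 'a::real_normed_vector"
  assumes pairs: "(\<lambda>k. \<Sum>l<k. t (2*l) + t (2*l+1)) \<longlonglongrightarrow> L" and even: "(\<lambda>k. t (2*k)) \<longlonglongrightarrow> 0"
  shows "(\<lambda>k. \<Sum>m<k. t m) \<longlonglongrightarrow> L"
proof (rule LIMSEQ_even_odd)
  show *: "(\<lambda>k. \<Sum>m<2*k. t m) \<longlonglongrightarrow> L"
    using pairs by (simp add: sum_lessThan_mult_2)
  show "(\<lambda>k. \<Sum>m<2*k+1. t m) \<longlonglongrightarrow> L"
    using tendsto_add[OF * even] by simp
qed

definition alternate_signs :: "(nat \<Rightarrow> 'a::uminus) \<Rightarrow> nat \<Rightarrow> 'a" where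
  "alternate_signs a m = (if even m then a (m div 2) else - a (m div 2))"

lemma alternate_signs_even_odd [simp]:
  "alternate_signs a (2*l) = a l" "alternate_signs a (Suc (2*l)) = - a l"
  by (simp_all add: alternate_signs_def)

section \<open>Absolute continuity\<close>

lemma absolutely_continuous_of_dominated:
  fixes \<mu> Q :: "'x::t2_space measure" and G :: "'x \<Rightarrow> real"
  assumes X: "compact (UNIV :: 'x set)" and \<mu>: "radon_measure \<mu>" and Q: "radon_measure Q"
    and G: "integrable \<mu> G" "\<And>x. 0 \<le> G x"
    and dom: "\<And>F. continuous_on UNIV F \<Longrightarrow> (\<And>x. 0 \<le> F x) \<Longrightarrow> (\<And>x. F x \<le> 1) \<Longrightarrow>
       (\<integral>x. F x \<partial>Q) \<le> (\<integral>x. F x * G x \<partial>\<mu>)"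
  shows "absolutely_continuous \<mu> Q"
proof (rule radon_absolutely_continuousI[OF \<mu> Q])
  fix K assume K: "compact K" "K \<in> null_sets \<mu>"
  interpret Q: finite_measure Q using Q unfolding radon_measure_def by blast
  define \<nu> where "\<nu> = density \<mu> (\<lambda>x. ennreal (G x))"
  interpret \<nu>: finite_measure \<nu> unfolding \<nu>_def by (rule finite_measure_density[OF G])
  have \<nu>: "radon_measure \<nu>" unfolding \<nu>_def by (rule radon_measure_density[OF \<mu> G])
  have sets: "sets \<mu> = sets borel" "sets Q = sets borel" "sets \<nu> = sets borel"
    using \<mu> Q \<nu> unfolding radon_measure_def by blast+
  have [measurable]: "G \<in> borel_measurable \<mu>" using G by auto
  have "K \<in> null_sets \<nu>"
    unfolding \<nu>_def using K(2) by (subst null_sets_density_iff) (auto intro: AE_mp[OF AE_not_in])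
  then have \<nu>K: "measure \<nu> K = 0" by (simp add: measure_def null_setsD1)
  have "measure Q K \<le> \<epsilon>" if \<epsilon>: "\<epsilon> > 0" for \<epsilon>
  proof -
    have "- K \<in> sets \<nu>" using K(1) sets by (simp add: borel_closed compact_imp_closed)
    then obtain C where C: "compact C" "C \<subseteq> - K" "measure \<nu> (- K) < measure \<nu> C + \<epsilon>"
      using radon_measure_inner_approx[OF \<nu> _ \<epsilon>] by blast
    have C_sets: "C \<in> sets \<mu>" "- C \<in> sets \<mu>"
      using radon_measure_compact_sets[OF \<mu> C(1)] sets.compl_sets[of C \<mu>] radon_measure_space[OF \<mu>]
      by (auto simp: Compl_eq_Diff_UNIV)
    have "measure \<nu> (- C) < \<epsilon>"
      using C(3) \<nu>K \<nu>.finite_measure_compl[of K] \<nu>.finite_measure_compl[of C] C_sets K(1) sets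
        radon_measure_space[OF \<nu>] by (simp add: Compl_eq_Diff_UNIV borel_closed compact_imp_closed)
    obtain F :: "'x \<Rightarrow> real" where F: "continuous_on UNIV F" "\<And>x. 0 \<le> F x" "\<And>x. F x \<le> 1"
        "\<And>x. x \<in> K \<Longrightarrow> F x = 1" "\<And>x. x \<in> C \<Longrightarrow> F x = 0"
      using Urysohn_compact_t2[OF X K(1) C(1)] C(2) by blast
    have F_meas: "F \<in> borel_measurable M" if "sets M = sets borel" for M :: "'x measure"
      using borel_measurable_continuous_onI[OF F(1)] measurable_cong_sets that by blast
    have "measure Q K = (\<integral>x. indicator K x \<partial>Q)"
      using radon_measure_space[OF Q] by simp
    also have "\<dots> \<le> (\<integral>x. F x \<partial>Q)"
      using F K(1) sets radon_measure_compact_sets[OF Q K(1)] F_meas[of Q]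
      by (intro integral_mono Q.integrable_const_bound[of _ 1])
         (auto simp: Q.emeasure_eq_measure split: split_indicator)
    also have "\<dots> \<le> (\<integral>x. F x * G x \<partial>\<mu>)"
      by (rule dom[OF F(1-3)])
    also have "\<dots> \<le> (\<integral>x. G x * indicator (- C) x \<partial>\<mu>)"
    proof (rule integral_mono)
      show "integrable \<mu> (\<lambda>x. F x * G x)"
        using integrable_scaleR_bounded[OF G(1) F_meas[OF sets(1)], of 1] F(2,3) by (simp add: mult.commute)
      show "integrable \<mu> (\<lambda>x. G x * indicator (- C) x)"
        using integrable_mult_indicator[OF C_sets(2) G(1)] by (simp add: mult.commute)
      show "F x * G x \<le> G x * indicator (- C) x" for x
        using F(2,3,5)[of x] G(2)[of x] by (cases "x \<in> C") (auto simp: mult_left_le_one_le)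
    qed
    also have "\<dots> = measure \<nu> (- C)"
      unfolding \<nu>_def by (rule measure_density_integral[OF G C_sets(2), symmetric])
    finally show ?thesis using \<open>measure \<nu> (- C) < \<epsilon>\<close> by simp
  qed
  then have "measure Q K = 0"
    by (metis field_le_epsilon add_0 antisym measure_nonneg)
  then show "emeasure Q K = 0" by (simp add: Q.emeasure_eq_measure)
qed

lemma absolutely_continuous_of_positive_series:
  fixes \<mu> :: "'x::t2_space measure" and Q :: "nat \<Rightarrow> 'x measure" and h :: "'x \<Rightarrow> real"
  assumes X: "compact (UNIV :: 'x set)" and \<mu>: "radon_measure \<mu>" and h: "integrable \<mu> h"
    and Q: "\<And>m. radon_measure (Q m)" and c: "\<And>m. 0 \<le> c m" "0 < c l"
    and sums: "\<And>F. continuous_on UNIV F \<Longrightarrow> (\<And>x. 0 \<le> F x) \<Longrightarrow> (\<And>x. F x \<le> 1) \<Longrightarrow>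
       (\<lambda>m. c m * (\<integral>x. F x \<partial>Q m)) sums ((\<integral>x. F x \<partial>\<mu>) + (\<integral>x. F x * h x \<partial>\<mu>))"
  shows "absolutely_continuous \<mu> (Q l)"
proof (rule absolutely_continuous_of_dominated[OF X \<mu> Q])
  interpret \<mu>: finite_measure \<mu> using \<mu> unfolding radon_measure_def by blast
  show "integrable \<mu> (\<lambda>x. \<bar>1 + h x\<bar> / c l)" "\<And>x. 0 \<le> \<bar>1 + h x\<bar> / c l"
    using h c by auto
  fix F :: "'x \<Rightarrow> real"
  assume F: "continuous_on UNIV F" "\<And>x. 0 \<le> F x" "\<And>x. F x \<le> 1"
  have F_meas: "F \<in> borel_measurable \<mu>"
    using borel_measurable_continuous_onI[OF F(1)] measurable_cong_sets \<mu>
    unfolding radon_measure_def by blast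
  have Fh: "integrable \<mu> (\<lambda>x. F x * h x)"
    using integrable_scaleR_bounded[OF h F_meas, of 1] F(2,3) by (simp add: mult.commute)
  have "c l * (\<integral>x. F x \<partial>Q l) \<le> (\<Sum>m. c m * (\<integral>x. F x \<partial>Q m))"
    using sums[OF F] sum_le_suminf[of "\<lambda>m. c m * (\<integral>x. F x \<partial>Q m)" "{l}"] c(1) F(2)
    by (simp add: sums_iff integral_nonneg)
  also have "\<dots> = (\<integral>x. F x * (1 + h x) \<partial>\<mu>)"
    using sums[OF F] Fh \<mu>.integrable_const_bound[of F 1] F F_meas
    by (simp add: sums_iff distrib_left)
  also have "\<dots> \<le> (\<integral>x. F x * \<bar>1 + h x\<bar> \<partial>\<mu>)"
  proof (rule integral_mono)
    show "integrable \<mu> (\<lambda>x. F x * (1 + h x))"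
      using Fh \<mu>.integrable_const_bound[of F 1] F F_meas by (simp add: distrib_left)
    show "integrable \<mu> (\<lambda>x. F x * \<bar>1 + h x\<bar>)"
      using integrable_scaleR_bounded[of \<mu> "\<lambda>x. \<bar>1 + h x\<bar>", OF _ F_meas, of 1] h F
      by (simp add: mult.commute)
    show "F x * (1 + h x) \<le> F x * \<bar>1 + h x\<bar>" for x
      using F(2) by (intro mult_left_mono) auto
  qed
  finally show "(\<integral>x. F x \<partial>Q l) \<le> (\<integral>x. F x * (\<bar>1 + h x\<bar> / c l) \<partial>\<mu>)"
    using c(2) by (simp add: field_simps)
qed

section \<open>Nuclear morphisms and separable maps\<close>

context hilbert_star
begin

lemma lin_map_add_pair_dens:
  fixes T :: "('x::topological_space \<Rightarrow> complex) \<Rightarrow> 'h"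
  assumes T: "lin_map cmul T" and X: "compact (UNIV :: 'x set)"
    and sets: "sets \<mu> = sets borel" and h: "integrable \<mu> h"
  shows "lin_map cmul (\<lambda>v. T v + cmul (pair_dens \<mu> v h) u)"
  unfolding lin_map_def
proof (intro conjI ballI allI)
  fix v w :: "'x \<Rightarrow> complex" assume v: "v \<in> CX" and w: "w \<in> CX"
  obtain B C where "\<And>x. cmod (v x) \<le> B" "\<And>x. cmod (w x) \<le> C"
    using CX_bounded[OF X v] CX_bounded[OF X w] by metis
  then have "pair_dens \<mu> (\<lambda>x. v x + w x) h = pair_dens \<mu> v h + pair_dens \<mu> w h"
    using CX_borel_measurable[OF _ sets] v w by (intro pair_dens_add[OF h]) auto
  then show "T (\<lambda>x. v x + w x) + cmul (pair_dens \<mu> (\<lambda>x. v x + w x) h) u =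
      T v + cmul (pair_dens \<mu> v h) u + (T w + cmul (pair_dens \<mu> w h) u)"
    using T v w unfolding lin_map_def by (simp add: scale_left_distrib algebra_simps)
next
  fix c and v :: "'x \<Rightarrow> complex" assume "v \<in> CX"
  then show "T (\<lambda>x. c * v x) + cmul (pair_dens \<mu> (\<lambda>x. c * v x) h) u =
      cmul c (T v + cmul (pair_dens \<mu> v h) u)"
    using T unfolding lin_map_def by (simp add: pair_dens_mult scale_right_distrib)
qed

lemma cmul_pos_neg_split:
  "cmul (a - b) g + cmul (2 * a + 2 * b) u = cmul a (g + 2 *\<^sub>R u) + cmul b (- g + 2 *\<^sub>R u)"
proof -
  have "cmul c (2 *\<^sub>R u) = cmul (2 * c) u" for c
  proof -
    have "cmul c (2 *\<^sub>R u) = cmul c (cmul 2 u)" using cmul_of_real[of 2 u] by simp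
    then show ?thesis by (simp add: cmul_cmul[symmetric] mult.commute)
  qed
  then show ?thesis
    by (simp add: scale_right_distrib scale_right_diff_distrib scale_left_distrib scale_left_diff_distrib)
qed

end

context unital_hilbert_star
begin

lemma tendsto_alternate_parts_series:
  fixes v :: "'x::topological_space \<Rightarrow> complex"
  assumes \<gamma>: "\<And>l. norm (\<gamma> l) \<le> 1" and d: "\<And>l. integrable \<mu> (d l)"
    and sum: "summable (\<lambda>l. tv_norm_dens \<mu> (d l))"
    and v: "v \<in> borel_measurable \<mu>" and B: "\<And>x. cmod (v x) \<le> B"
    and conv: "(\<lambda>k. \<Sum>l<k. cmul (pair_dens \<mu> v (d l)) (\<gamma> l)) \<longlonglongrightarrow> L"
  shows "(\<lambda>k. \<Sum>m<k. cmul (pair_dens \<mu> v (\<lambda>x. max 0 (alternate_signs (\<lambda>l. d l x) m)))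
                            (alternate_signs \<gamma> m + 2 *\<^sub>R e))
           \<longlonglongrightarrow> L + cmul (pair_dens \<mu> v (\<lambda>x. \<Sum>l. 2 * \<bar>d l x\<bar>)) e"
proof -
  define f where "f m = (\<lambda>x. max 0 (alternate_signs (\<lambda>l. d l x) m))" for m
  define g where "g l = (\<lambda>x. 2 * \<bar>d l x\<bar>)" for l
  define t where "t m = cmul (pair_dens \<mu> v (f m)) (alternate_signs \<gamma> m + 2 *\<^sub>R e)" for m
  have f: "integrable \<mu> (f m)" for m
    unfolding f_def alternate_signs_def using d by (cases "even m") (auto intro!: integrable_max)
  have g: "integrable \<mu> (g l)" "0 \<le> g l x" for l x
    using d unfolding g_def by auto
  have sum_g: "summable (\<lambda>l. \<integral>x. g l x \<partial>\<mu>)"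
    using summable_mult[OF sum, of 2] unfolding g_def tv_norm_dens_def by simp
  have "d l = (\<lambda>x. 1 * f (2*l) x + (-1) * f (2*l+1) x)" "g l = (\<lambda>x. 2 * f (2*l) x + 2 * f (2*l+1) x)" for l
    unfolding f_def g_def by (auto simp: max_def)
  then have pd: "pair_dens \<mu> v (d l) = pair_dens \<mu> v (f (2*l)) - pair_dens \<mu> v (f (2*l+1))"
    "pair_dens \<mu> v (g l) = 2 * pair_dens \<mu> v (f (2*l)) + 2 * pair_dens \<mu> v (f (2*l+1))" for l
    by (simp_all only: pair_dens_lincomb[OF f f v B]) simp_all
  have "t (2*l) + t (2*l+1) = cmul (pair_dens \<mu> v (d l)) (\<gamma> l) + cmul (pair_dens \<mu> v (g l)) e" for l
  proof -
    have "t (2*l) + t (2*l+1) = cmul (pair_dens \<mu> v (f (2*l))) (\<gamma> l + 2 *\<^sub>R e)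
        + cmul (pair_dens \<mu> v (f (2*l+1))) (- \<gamma> l + 2 *\<^sub>R e)"
      by (simp add: t_def)
    also have "\<dots> = cmul (pair_dens \<mu> v (f (2*l)) - pair_dens \<mu> v (f (2*l+1))) (\<gamma> l)
        + cmul (2 * pair_dens \<mu> v (f (2*l)) + 2 * pair_dens \<mu> v (f (2*l+1))) e"
      by (rule cmul_pos_neg_split[symmetric])
    finally show ?thesis by (simp only: pd)
  qed
  moreover have "(\<lambda>k. (\<Sum>l<k. cmul (pair_dens \<mu> v (d l)) (\<gamma> l)) + cmul (\<Sum>l<k. pair_dens \<mu> v (g l)) e)
      \<longlonglongrightarrow> L + cmul (pair_dens \<mu> v (\<lambda>x. \<Sum>l. g l x)) e"
    using pair_dens_suminf[OF g sum_g v B] unfolding sums_def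
    by (intro tendsto_add conv cmul_tendsto)
  ultimately have pairs: "(\<lambda>k. \<Sum>l<k. t (2*l) + t (2*l+1)) \<longlonglongrightarrow> L + cmul (pair_dens \<mu> v (\<lambda>x. \<Sum>l. g l x)) e"
    by (simp add: sum.distrib scale_sum_left)
  have bound: "norm (t (2*k)) \<le> B * tv_norm_dens \<mu> (d k) * 3" for k
  proof -
    have "cmod (pair_dens \<mu> v (f (2*k))) \<le> B * (\<integral>x. \<bar>f (2*k) x\<bar> \<partial>\<mu>)"
      unfolding pair_dens_eq_integral_scaleR by (rule norm_integral_scaleR_bounded_le[OF f v B])
    also have "\<dots> \<le> B * tv_norm_dens \<mu> (d k)"
      unfolding tv_norm_dens_def using f d order_trans[OF norm_ge_zero B]
      by (intro mult_left_mono integral_mono) (auto simp: f_def)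
    moreover have "norm (\<gamma> k + 2 *\<^sub>R e) \<le> 3"
      using norm_triangle_ineq[of "\<gamma> k" "2 *\<^sub>R e"] \<gamma>[of k] norm_e by simp
    ultimately show ?thesis
      unfolding t_def norm_cmul using order_trans[OF norm_ge_zero B]
      by (intro mult_mono) (auto simp: tv_norm_dens_def)
  qed
  have "(\<lambda>k. B * tv_norm_dens \<mu> (d k) * 3) \<longlonglongrightarrow> 0"
    using summable_LIMSEQ_zero[OF sum] by (intro tendsto_mult_left_zero tendsto_mult_right_zero)
  then have "(\<lambda>k. t (2*k)) \<longlonglongrightarrow> 0"
    by (rule Lim_null_comparison[OF always_eventually, rotated]) (use bound in blast)
  with pairs show ?thesis
    unfolding t_def f_def g_def by (rule LIMSEQ_interleaved_partial_sums)
qed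

lemma separable_of_nuclear_morphism:
  fixes T :: "('x::t2_space \<Rightarrow> complex) \<Rightarrow> 'h" and \<mu> :: "'x measure"
  assumes X: "compact (UNIV :: 'x set)" and \<mu>: "radon_measure \<mu>"
    and T: "lin_map cmul T" and N: "nuclear_morphism cmul star \<mu> T"
  shows "\<exists>h. in_I \<mu> h \<and> (AE x in \<mu>. 0 \<le> h x) \<and>
           separable_map cmul ip star e (\<lambda>v. T v + cmul (pair_dens \<mu> v h) e)"
proof -
  have sets: "sets \<mu> = sets borel" using \<mu> unfolding radon_measure_def by blast
  obtain \<gamma> d where \<gamma>: "\<And>l. \<gamma> l \<in> hermitian star" "\<And>l. norm (\<gamma> l) \<le> 1"
    and d: "\<And>l. integrable \<mu> (d l)" and sum: "summable (\<lambda>l. tv_norm_dens \<mu> (d l))"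
    and conv: "\<And>v. v \<in> CX \<Longrightarrow> (\<lambda>k. \<Sum>l<k. cmul (pair_dens \<mu> v (d l)) (\<gamma> l)) \<longlonglongrightarrow> T v"
    using N unfolding nuclear_morphism_def in_I_def by blast
  define h where "h x = (\<Sum>l. 2 * \<bar>d l x\<bar>)" for x
  have sum_abs: "summable (\<lambda>l. \<integral>x. 2 * \<bar>d l x\<bar> \<partial>\<mu>)"
    using summable_mult[OF sum, of 2] unfolding tv_norm_dens_def by simp
  have "AE x in \<mu>. summable (\<lambda>l. 2 * \<bar>d l x\<bar>)"
    using AE_summable_abs_of_summable_integral[of \<mu> "\<lambda>l x. 2 * \<bar>d l x\<bar>"] d sum_abs by simp
  then have h_nonneg: "AE x in \<mu>. 0 \<le> h x"
    unfolding h_def by eventually_elim (auto intro: suminf_nonneg)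
  have h: "in_I \<mu> h"
    using integrable_suminf_nonneg[of \<mu> "\<lambda>l x. 2 * \<bar>d l x\<bar>"] d sum_abs
    unfolding h_def in_I_def by auto
  define f where "f m x = max 0 (alternate_signs (\<lambda>l. d l x) m)" for m x
  have f: "integrable \<mu> (f m)" "0 \<le> f m x" for m x
    unfolding f_def alternate_signs_def using d by (cases "even m") (auto intro!: integrable_max)
  define q where "q m = density \<mu> (\<lambda>x. ennreal (f m x))" for m
  have q: "radon_measure (q m)" for m
    unfolding q_def by (rule radon_measure_density[OF \<mu> f])
  have p: "alternate_signs \<gamma> m + 2 *\<^sub>R e \<in> unital_cone ip star e" for m
    unfolding alternate_signs_def using \<gamma> by (intro hermitian_add_2e_in_cone) (auto intro: hermitian_uminus)
  have "(\<lambda>k. \<Sum>m<k. cmul (pair_meas v (q m)) (alternate_signs \<gamma> m + 2 *\<^sub>R e))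
      \<longlonglongrightarrow> T v + cmul (pair_dens \<mu> v h) e" if v: "v \<in> CX" for v
  proof -
    have v_meas: "v \<in> borel_measurable \<mu>" by (rule CX_borel_measurable[OF v sets])
    obtain B where B: "\<And>x. cmod (v x) \<le> B" using CX_bounded[OF X v] by blast
    have "pair_meas v (q m) = pair_dens \<mu> v (f m)" for m
      unfolding q_def using f v_meas by (intro pair_meas_density) auto
    then show ?thesis
      using tendsto_alternate_parts_series[OF \<gamma>(2) d sum v_meas B conv[OF v]]
      unfolding h_def f_def by simp
  qed
  moreover have "lin_map cmul (\<lambda>v. T v + cmul (pair_dens \<mu> v h) e)"
    using h by (intro lin_map_add_pair_dens[OF T X sets]) (simp add: in_I_def)
  ultimately have "separable_map cmul ip star e (\<lambda>v. T v + cmul (pair_dens \<mu> v h) e)"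
    unfolding separable_map_def using q p
    by (intro conjI exI[of _ q] exI[of _ "\<lambda>m. alternate_signs \<gamma> m + 2 *\<^sub>R e"]) auto
  with h h_nonneg show ?thesis by blast
qed

lemma separable_pairing_sums:
  fixes F :: "'x::topological_space \<Rightarrow> real"
  assumes conv: "\<And>v. v \<in> CX \<Longrightarrow> (\<lambda>k. \<Sum>l<k. cmul (pair_meas v (q l)) (p l)) \<longlonglongrightarrow> T v + cmul (pair_dens \<mu> v h) e"
    and T_e: "\<forall>v\<in>CX. ip (T v) e = integral\<^sup>L \<mu> v"
    and F: "continuous_on UNIV F"
  shows "(\<lambda>l. Re (ip (p l) e) * (\<integral>x. F x \<partial>q l)) sums ((\<integral>x. F x \<partial>\<mu>) + (\<integral>x. F x * h x \<partial>\<mu>))"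
proof -
  define v where "v = (\<lambda>x. complex_of_real (F x))"
  have v: "v \<in> CX" unfolding CX_def v_def using F by (auto intro!: continuous_intros)
  have "(\<lambda>k. Re (ip (\<Sum>l<k. cmul (pair_meas v (q l)) (p l)) e)) \<longlonglongrightarrow>
      Re (ip (T v + cmul (pair_dens \<mu> v h) e) e)"
    by (rule Re_ip_tendsto_left[OF conv[OF v]])
  moreover have "Re (ip (\<Sum>l<k. cmul (pair_meas v (q l)) (p l)) e) = (\<Sum>l<k. Re (ip (p l) e) * (\<integral>x. F x \<partial>q l))" for k
    by (simp add: ip_sum_left ip_cmul_left pair_meas_def v_def mult.commute)
  moreover have "Re (ip (T v + cmul (pair_dens \<mu> v h) e) e) = (\<integral>x. F x \<partial>\<mu>) + (\<integral>x. F x * h x \<partial>\<mu>)"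
    using T_e v by (simp add: ip_add_left ip_cmul_left ip_e_e pair_dens_def v_def flip: of_real_mult)
  ultimately show ?thesis unfolding sums_def by simp
qed

lemma nuclear_morphism_of_density_series:
  fixes T :: "('x::topological_space \<Rightarrow> complex) \<Rightarrow> 'h"
  assumes p: "\<And>l. p l \<in> hermitian star" and d: "\<And>l. integrable \<mu> (d l)"
    and sum: "summable (\<lambda>l. norm (p l) * tv_norm_dens \<mu> (d l))" and h: "integrable \<mu> h"
    and conv: "\<And>v. v \<in> CX \<Longrightarrow>
      (\<lambda>k. \<Sum>l<k. cmul (pair_dens \<mu> v (d l)) (p l)) \<longlonglongrightarrow> T v + cmul (pair_dens \<mu> v h) e"
  shows "nuclear_morphism cmul star \<mu> T"
proof -
  define \<gamma> where "\<gamma> l = (case l of 0 \<Rightarrow> e | Suc m \<Rightarrow> (1 / norm (p m)) *\<^sub>R p m)" for l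
  define d' where "d' l = (case l of 0 \<Rightarrow> (\<lambda>x. - h x) | Suc m \<Rightarrow> (\<lambda>x. norm (p m) * d m x))" for l
  have \<gamma>: "\<gamma> l \<in> hermitian star \<and> norm (\<gamma> l) \<le> 1" for l
    using e_hermitian norm_e p by (cases l) (auto simp: \<gamma>_def intro: hermitian_scaleR hermitian_zero)
  have d': "in_I \<mu> (d' l)" for l
    using h d by (cases l) (auto simp: d'_def in_I_def)
  have "summable (\<lambda>m. tv_norm_dens \<mu> (d' (Suc m)))"
    using sum by (simp add: d'_def tv_norm_dens_def abs_mult)
  then have sum': "summable (\<lambda>l. tv_norm_dens \<mu> (d' l))"
    by (rule summable_Suc_iff[THEN iffD1])
  have "(\<lambda>k. \<Sum>l<k. cmul (pair_dens \<mu> v (d' l)) (\<gamma> l)) \<longlonglongrightarrow> T v" if v: "v \<in> CX" for v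
  proof -
    have "cmul (pair_dens \<mu> v (d' (Suc m))) (\<gamma> (Suc m)) = cmul (pair_dens \<mu> v (d m)) (p m)" for m
    proof -
      have "(\<lambda>x. v x * complex_of_real (norm (p m) * d m x)) =
          (\<lambda>x. complex_of_real (norm (p m)) * (v x * complex_of_real (d m x)))"
        by (simp add: fun_eq_iff mult_ac)
      then have "pair_dens \<mu> v (d' (Suc m)) = complex_of_real (norm (p m)) * pair_dens \<mu> v (d m)"
        unfolding pair_dens_def d'_def by simp
      then have "cmul (pair_dens \<mu> v (d' (Suc m))) (\<gamma> (Suc m)) =
          cmul (pair_dens \<mu> v (d m)) (cmul (complex_of_real (norm (p m))) ((1 / norm (p m)) *\<^sub>R p m))"
        by (simp add: \<gamma>_def cmul_cmul[symmetric] mult.commute)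
      then show ?thesis
        by (cases "p m = 0") (simp_all add: cmul_of_real)
    qed
    moreover have "cmul (pair_dens \<mu> v (d' 0)) (\<gamma> 0) = - cmul (pair_dens \<mu> v h) e"
      by (simp add: d'_def \<gamma>_def pair_dens_def)
    ultimately have eq: "(\<lambda>k. \<Sum>l<Suc k. cmul (pair_dens \<mu> v (d' l)) (\<gamma> l)) =
        (\<lambda>k. - cmul (pair_dens \<mu> v h) e + (\<Sum>l<k. cmul (pair_dens \<mu> v (d l)) (p l)))"
      by (simp only: sum.lessThan_Suc_shift)
    have "(\<lambda>k. - cmul (pair_dens \<mu> v h) e + (\<Sum>l<k. cmul (pair_dens \<mu> v (d l)) (p l))) \<longlonglongrightarrow> T v"
      using tendsto_add[OF tendsto_const conv[OF v], of "- cmul (pair_dens \<mu> v h) e"] by simp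
    then have "(\<lambda>k. \<Sum>l<Suc k. cmul (pair_dens \<mu> v (d' l)) (\<gamma> l)) \<longlonglongrightarrow> T v"
      unfolding eq .
    then show ?thesis by (rule LIMSEQ_imp_Suc)
  qed
  with \<gamma> d' sum' show ?thesis
    unfolding nuclear_morphism_def by blast
qed

lemma nuclear_morphism_of_separable:
  fixes T :: "('x::t2_space \<Rightarrow> complex) \<Rightarrow> 'h" and \<mu> :: "'x measure"
  assumes X: "compact (UNIV :: 'x set)" and \<mu>: "radon_measure \<mu>"
    and T_e: "\<forall>v\<in>CX. ip (T v) e = integral\<^sup>L \<mu> v" and h: "in_I \<mu> h"
    and S: "separable_map cmul ip star e (\<lambda>v. T v + cmul (pair_dens \<mu> v h) e)"
  shows "nuclear_morphism cmul star \<mu> T"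
proof -
  interpret \<mu>: finite_measure \<mu> using \<mu> unfolding radon_measure_def by blast
  have sets: "sets \<mu> = sets borel" using \<mu> unfolding radon_measure_def by blast
  have h_int: "integrable \<mu> h" using h unfolding in_I_def by blast
  obtain q :: "nat \<Rightarrow> 'x measure" and p where q: "\<And>l. radon_measure (q l)"
    and p: "\<And>l. p l \<in> unital_cone ip star e"
    and conv: "\<And>v. v \<in> CX \<Longrightarrow>
      (\<lambda>k. \<Sum>l<k. cmul (pair_meas v (q l)) (p l)) \<longlonglongrightarrow> T v + cmul (pair_dens \<mu> v h) e"
    using S unfolding separable_map_def by blast
  define a where "a l = Re (ip (p l) e)" for l
  have a: "0 \<le> a l" "norm (p l) \<le> sqrt 2 * a l" for l
    unfolding a_def using p by (auto intro: unital_cone_Re_ip_nonneg unital_cone_Re_ip)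
  have pairing: "(\<lambda>l. a l * (\<integral>x. F x \<partial>q l)) sums ((\<integral>x. F x \<partial>\<mu>) + (\<integral>x. F x * h x \<partial>\<mu>))"
    if "continuous_on UNIV F" for F :: "'x \<Rightarrow> real"
    unfolding a_def by (rule separable_pairing_sums[OF conv T_e that])
  have sum_mass: "summable (\<lambda>l. a l * measure (q l) UNIV)"
    using pairing[of "\<lambda>_. 1"] radon_measure_space[OF q] by (auto simp: sums_iff)
  have ac: "absolutely_continuous \<mu> (q l)" if "p l \<noteq> 0" for l
  proof (rule absolutely_continuous_of_positive_series[OF X \<mu> h_int q a(1)])
    have "0 < sqrt 2 * a l" using that a(2)[of l] zero_less_norm_iff[of "p l"] by linarith
    then show "0 < a l" by (simp add: zero_less_mult_iff)
  qed (rule pairing)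
  from radon_measure_real_densities[OF \<mu> q ac]
  obtain D where "\<forall>l. p l \<noteq> 0 \<longrightarrow> integrable \<mu> (D l) \<and> (\<forall>x. 0 \<le> D l x) \<and>
      density \<mu> (\<lambda>x. ennreal (D l x)) = q l" ..
  then have D: "integrable \<mu> (D l)" "\<And>x. 0 \<le> D l x" "density \<mu> (\<lambda>x. ennreal (D l x)) = q l"
    if "p l \<noteq> 0" for l
    using that by auto
  define d where "d l = (if p l = 0 then (\<lambda>_. 0) else D l)" for l
  show ?thesis
  proof (rule nuclear_morphism_of_density_series)
    show "p l \<in> hermitian star" for l using p unfolding unital_cone_def by blast
    show "integrable \<mu> (d l)" for l using D unfolding d_def by auto
    show "integrable \<mu> h" by (rule h_int)
    have bound: "norm (p l) * tv_norm_dens \<mu> (d l) \<le> sqrt 2 * (a l * measure (q l) UNIV)" for l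
    proof (cases "p l = 0")
      case False
      then have "tv_norm_dens \<mu> (d l) = measure (q l) UNIV"
        using D[OF False] measure_density_integral[of \<mu> "D l" UNIV] sets.top[of \<mu>] radon_measure_space[OF \<mu>]
        by (simp add: d_def tv_norm_dens_def)
      then show ?thesis
        using mult_right_mono[OF a(2)[of l] measure_nonneg[of "q l" UNIV]] by (simp add: mult.assoc)
    qed (use a(1) in \<open>simp add: d_def tv_norm_dens_def\<close>)
    moreover have "0 \<le> norm (p l) * tv_norm_dens \<mu> (d l)" for l
      by (simp add: tv_norm_dens_def)
    ultimately show "summable (\<lambda>l. norm (p l) * tv_norm_dens \<mu> (d l))"
      by (intro summable_comparison_test'[OF summable_mult[OF sum_mass]]) auto
    fix v :: "'x \<Rightarrow> complex" assume v: "v \<in> CX"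
    have "cmul (pair_meas v (q l)) (p l) = cmul (pair_dens \<mu> v (d l)) (p l)" for l
    proof (cases "p l = 0")
      case False
      then show ?thesis
        using D[OF False] pair_meas_density[of "D l" \<mu> v] CX_borel_measurable[OF v sets]
        by (simp add: d_def borel_measurable_integrable)
    qed simp
    then show "(\<lambda>k. \<Sum>l<k. cmul (pair_dens \<mu> v (d l)) (p l)) \<longlonglongrightarrow> T v + cmul (pair_dens \<mu> v h) e"
      using conv[OF v] by simp
  qed
qed

end

theorem mainTheorem12:
  fixes cmul :: "complex \<Rightarrow> 'h::banach \<Rightarrow> 'h"
    and ip :: "'h \<Rightarrow> 'h \<Rightarrow> complex"
    and star :: "'h \<Rightarrow> 'h"
    and e :: 'h
    and T :: "('x::t2_space \<Rightarrow> complex) \<Rightarrow> 'h"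
    and \<mu> :: "'x measure"
  assumes X_compact: "compact (UNIV :: 'x set)"
    and H: "hilbert_star_space cmul ip star"
    and e_herm: "e \<in> hermitian star"
    and e_unit: "norm e = 1"
    and T_up: "unital_positive cmul ip star e T"
    and mu_prob: "prob_space \<mu>"
    and mu_radon: "radon_measure \<mu>"
    and mu_T: "\<forall>v\<in>CX. ip (T v) e = integral\<^sup>L \<mu> v"
  shows "(nuclear_morphism cmul star \<mu> T \<longleftrightarrow>
            (\<exists>h. in_I \<mu> h \<and>
                 separable_map cmul ip star e (\<lambda>v. T v + cmul (pair_dens \<mu> v h) e)))
       \<and> (nuclear_morphism cmul star \<mu> T \<longrightarrow>
            (\<exists>h. in_I \<mu> h \<and> (AE x in \<mu>. h x \<ge> 0) \<and>
                 separable_map cmul ip star e (\<lambda>v. T v + cmul (pair_dens \<mu> v h) e)))"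
proof -
  interpret unital_hilbert_star cmul ip star e
    by (intro unital_hilbert_star.intro hilbert_star.intro unital_hilbert_star_axioms.intro H e_herm e_unit)
  have "lin_map cmul T"
    using T_up unfolding unital_positive_def by blast
  then have "nuclear_morphism cmul star \<mu> T \<Longrightarrow>
      \<exists>h. in_I \<mu> h \<and> (AE x in \<mu>. 0 \<le> h x) \<and>
        separable_map cmul ip star e (\<lambda>v. T v + cmul (pair_dens \<mu> v h) e)"
    by (rule separable_of_nuclear_morphism[OF X_compact mu_radon])
  moreover have "nuclear_morphism cmul star \<mu> T"
    if "in_I \<mu> h" "separable_map cmul ip star e (\<lambda>v. T v + cmul (pair_dens \<mu> v h) e)" for h
    by (rule nuclear_morphism_of_separable[OF X_compact mu_radon mu_T that])
  ultimately show ?thesis by blast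
qed

end
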